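(* Let $\mathcal B$ and $\tilde{\mathcal B}$ be two matrix bundles of $n\times n$ complex matrices such that the closure $\overline{\tilde{\mathcal B}}\supseteq\mathcal B$, and such that a matrix in $\mathcal B$ has at least as many distinct eigenvalues as a matrix in $\tilde{\mathcal B}$. Let $d=\{d_1\ge d_2\ge\cdots\}$ and $\tilde d=\{\tilde d_1\ge\tilde d_2\ge\cdots\}$ be the degree sequences of minimal polynomials associated with $\mathcal B$ and $\tilde{\mathcal B}$ respectively. Then, as partitions of $n$, $\tilde d\ge d$ in the dominance ordering, i.e. $$\tilde d_1+\tilde d_2+\cdots+\tilde d_j\ \ge\ d_1+d_2+\cdots+d_j\qquad\text{for each } j=1,2,\dots.$$
   Context: For an eigenvalue $\lambda$ of a matrix with elementary Jordan blocks of orders $n_1\ge n_2\ge\cdots\ge n_l>0$, its Segre characteristic is the infinite sequence $\{n_1,\dots,n_l,0,0,\dots\}$. Given $k$ nonincreasing sequences $\{n_{i1}\ge n_{i2}\ge\cdots\}$ of nonnegative integers ($i=1,\dots,k$, finitely many nonzero terms) with $\sum_{i,j}n_{ij}=n$, the matrix bundle they define is the set of all $n\times n$ complex matrices having exactly $k$ distinct eigenvalues (with arbitrary values) whose Segre characteristics are these sequences. The closure is taken in $\mathbb{C}^{n\times n}$. For a matrix in such a bundle, its minimal polynomials (invariant factors) $p_1,p_2,\dots$ satisfy $p_{i+1}\mid p_i$, and $\deg p_i=d_i=\sum_{j=1}^k n_{ji}$; the sequence $d=\{d_1\ge d_2\ge\cdots\}$ is the degree sequence of minimal polynomials associated with the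 bundle, and it is a partition of $n$. *)

theory Defs
  imports Complex_Main "Jordan_Normal_Form.Jordan_Normal_Form_Uniqueness"
    "HOL-Library.Multiset"
begin

text \<open>Segre characteristic of lambda for the square matrix A: the multiset of the
 orders of the elementary Jordan blocks of A belonging to lambda (the nonzero terms of
 the Segre sequence), read off from a Jordan normal form of A.\<close>
definition segre :: "complex mat \<Rightarrow> complex \<Rightarrow> nat multiset" where
  "segre A c = (let n_as = (SOME n_as. jordan_nf A n_as)
                in mset (map fst (filter (\<lambda>(k, e). e = c) n_as)))"

text \<open>The i-th term (0-indexed) of the nonincreasing sequence associated with a
 multiset of positive numbers, padded with zeros.\<close>
definition seq_term :: "nat multiset \<Rightarrow> nat \<Rightarrow> nat" where
  "seq_term S i = (if i < size S then rev (sorted_list_of_multiset S) ! i else 0)"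

definition valid_bundle_data :: "nat \<Rightarrow> nat multiset list \<Rightarrow> bool" where
  "valid_bundle_data n Ss \<longleftrightarrow>
     (\<forall>S\<in>set Ss. S \<noteq> {#} \<and> 0 \<notin># S) \<and> (\<Sum>S\<leftarrow>Ss. sum_mset S) = n"

text \<open>The matrix bundle: all n x n complex matrices having exactly k = length Ss distinct
 eigenvalues (arbitrary values) whose Segre characteristics are the given ones.\<close>
definition matrix_bundle :: "nat \<Rightarrow> nat multiset list \<Rightarrow> complex mat set" where
  "matrix_bundle n Ss = {A \<in> carrier_mat n n. \<exists>ls :: complex list.
      length ls = length Ss \<and> distinct ls \<and> set ls = {c. eigenvalue A c} \<and>
      (\<forall>i < length Ss. segre A (ls ! i) = Ss ! i)}"

definition mat_closure :: "nat \<Rightarrow> complex mat set \<Rightarrow> complex mat set" where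
  "mat_closure n M = {A \<in> carrier_mat n n. \<exists>X :: nat \<Rightarrow> complex mat.
      (\<forall>m. X m \<in> M) \<and> (\<forall>i < n. \<forall>j < n. (\<lambda>m. X m $$ (i, j)) \<longlonglongrightarrow> A $$ (i, j))}"

definition deg_seq :: "nat multiset list \<Rightarrow> nat \<Rightarrow> nat" where
  "deg_seq Ss i = (\<Sum>S\<leftarrow>Ss. seq_term S i)"

definition dominates :: "(nat \<Rightarrow> nat) \<Rightarrow> (nat \<Rightarrow> nat) \<Rightarrow> bool" where
  "dominates d e \<longleftrightarrow> (\<forall>j. (\<Sum>i<j. e i) \<le> (\<Sum>i<j. d i))"

end

theory Submission
  imports Defs "Jordan_Normal_Form.Jordan_Normal_Form_Existence" "Jordan_Normal_Form.Schur_Decomposition"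
    "Jordan_Normal_Form.DL_Rank"
begin

text \<open>If \<open>p\<close> is a monic polynomial of degree \<open>m\<close> whose root \<open>\<lambda>\<^sub>l\<close> has multiplicity \<open>c\<^sub>l\<close>,
  then for a matrix \<open>A\<close> with eigenvalues \<open>\<lambda>\<^sub>l\<close> and Segre characteristics \<open>n\<^sub>l\<^sub>i\<close> the Jordan form gives
  \<open>dim ker p(A) = \<Sum>\<^sub>l \<Sum>\<^sub>i min n\<^sub>l\<^sub>i c\<^sub>l\<close>. Maximising over \<open>p\<close> yields \<open>\<Sum>\<^sub>i min d\<^sub>i m\<close>, the sum of the
  first \<open>m\<close> parts of the partition conjugate to the degree sequence \<open>d\<close>. The nullity is upper
  semicontinuous, and the roots of maximising polynomials for a convergent sequence of matrices
  stay bounded, so for \<open>A\<close> in the closure of a bundle with degree sequence \<open>d'\<close> one gets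
  \<open>\<Sum>\<^sub>i min d'\<^sub>i m \<le> \<Sum>\<^sub>i min d\<^sub>i m\<close> for all \<open>m\<close>: the conjugate of \<open>d'\<close> is dominated by that of \<open>d\<close>.
  Conjugation reverses the dominance order, hence \<open>d'\<close> dominates \<open>d\<close>.\<close>

section \<open>Sums of minima and dominance\<close>

lemma exists_sum_eq_between:
  fixes lo hi :: "nat \<Rightarrow> nat"
  assumes "\<And>l. l < L \<Longrightarrow> lo l \<le> hi l" and "(\<Sum>l<L. lo l) \<le> m" and "m \<le> (\<Sum>l<L. hi l)"
  shows "\<exists>c. (\<forall>l<L. lo l \<le> c l \<and> c l \<le> hi l) \<and> (\<Sum>l<L. c l) = m"
  using assms
proof (induction L arbitrary: m)
  case 0
  then show ?case by simp
next
  case (Suc L)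
  define c\<^sub>L where "c\<^sub>L = max (lo L) (m - (\<Sum>l<L. hi l))"
  have "(\<Sum>l<L. lo l) \<le> (\<Sum>l<L. hi l)"
    using Suc.prems(1) by (intro sum_mono) auto
  then have IH_prems: "(\<Sum>l<L. lo l) \<le> m - c\<^sub>L" "m - c\<^sub>L \<le> (\<Sum>l<L. hi l)"
    and bounds: "lo L \<le> c\<^sub>L" "c\<^sub>L \<le> hi L" "c\<^sub>L \<le> m"
    using Suc.prems unfolding c\<^sub>L_def by auto
  obtain c where c: "\<forall>l<L. lo l \<le> c l \<and> c l \<le> hi l" "(\<Sum>l<L. c l) = m - c\<^sub>L"
    using Suc.IH[of "m - c\<^sub>L"] Suc.prems(1) IH_prems by auto
  then show ?case
    using bounds by (intro exI[of _ "c(L := c\<^sub>L)"]) (auto simp: less_Suc_eq)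
qed

lemma sum_sum_min_le_sum_min_sum:
  fixes a :: "nat \<Rightarrow> nat \<Rightarrow> nat"
  assumes "(\<Sum>l<L. c l) \<le> m"
  shows "(\<Sum>l<L. \<Sum>i<N. min (a l i) (c l)) \<le> (\<Sum>i<N. min (\<Sum>l<L. a l i) m)"
proof -
  have "(\<Sum>l<L. min (a l i) (c l)) \<le> min (\<Sum>l<L. a l i) m" for i
    using sum_mono[of "{..<L}" "\<lambda>l. min (a l i) (c l)" "\<lambda>l. a l i"]
      sum_mono[of "{..<L}" "\<lambda>l. min (a l i) (c l)" c] assms by auto
  then show ?thesis
    by (subst sum.swap) (rule sum_mono)
qed

lemma ex_threshold_index:
  fixes D :: "nat \<Rightarrow> nat"
  assumes "D N \<le> m"
  obtains j where "D j \<le> m" and "min m (D 0) \<le> D (j - 1)"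
proof -
  define j where "j = (LEAST i. D i \<le> m)"
  have "D j \<le> m"
    unfolding j_def by (rule LeastI[of _ N]) fact
  moreover have "min m (D 0) \<le> D (j - 1)"
  proof (cases "j = 0")
    case False
    then have "\<not> D (j - 1) \<le> m"
      unfolding j_def by (intro not_less_Least) (auto simp: j_def)
    then show ?thesis by simp
  qed simp
  ultimately show thesis
    using that by blast
qed

text \<open>The bound is attained: cut every column at the first index \<open>j\<close> where the column sums
  drop to \<open>m\<close>, spreading the remaining budget between the values at \<open>j\<close> and \<open>j - 1\<close>.\<close>

lemma ex_sum_min_sum_le_sum_sum_min:
  fixes a :: "nat \<Rightarrow> nat \<Rightarrow> nat"
  assumes antimono: "\<And>l i j. i \<le> j \<Longrightarrow> a l j \<le> a l i"
    and vanish: "\<And>l i. l < L \<Longrightarrow> N \<le> i \<Longrightarrow> a l i = 0"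
  shows "\<exists>c. (\<Sum>l<L. c l) \<le> m \<and>
    (\<Sum>i<N. min (\<Sum>l<L. a l i) m) \<le> (\<Sum>l<L. \<Sum>i<N. min (a l i) (c l))"
proof -
  define D where "D i = (\<Sum>l<L. a l i)" for i
  have D_antimono: "i \<le> j \<Longrightarrow> D j \<le> D i" for i j
    unfolding D_def by (intro sum_mono antimono)
  have "D N \<le> m"
    using vanish by (simp add: D_def)
  then obtain j where "D j \<le> m" "min m (D 0) \<le> D (j - 1)"
    using ex_threshold_index by blast
  moreover have "D j \<le> min m (D 0)"
    using \<open>D j \<le> m\<close> D_antimono[of 0 j] by simp
  moreover have "a l j \<le> a l (j - 1)" for l
    by (rule antimono) simp
  ultimately obtain c where c: "\<And>l. l < L \<Longrightarrow> a l j \<le> c l \<and> c l \<le> a l (j - 1)"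
    and sum_c: "(\<Sum>l<L. c l) = min m (D 0)"
    using exists_sum_eq_between[of L "\<lambda>l. a l j" "\<lambda>l. a l (j - 1)" "min m (D 0)"]
    unfolding D_def by blast
  have "min (D i) m \<le> (\<Sum>l<L. min (a l i) (c l))" for i
  proof (cases "j \<le> i")
    case True
    have "a l i \<le> c l" if "l < L" for l
      using antimono[OF True, of l] c[OF that] by linarith
    then have "(\<Sum>l<L. min (a l i) (c l)) = D i"
      unfolding D_def by (intro sum.cong) auto
    then show ?thesis by simp
  next
    case False
    have "c l \<le> a l i" if "l < L" for l
      using antimono[of i "j - 1" l] False c[OF that] by linarith
    then have "(\<Sum>l<L. min (a l i) (c l)) = (\<Sum>l<L. c l)"
      by (intro sum.cong) auto
    then show ?thesis
      using sum_c D_antimono[of 0 i] by simp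
  qed
  then have "(\<Sum>i<N. min (D i) m) \<le> (\<Sum>l<L. \<Sum>i<N. min (a l i) (c l))"
    by (subst sum.swap) (rule sum_mono)
  then show ?thesis
    using sum_c unfolding D_def by (intro exI[of _ c]) auto
qed

text \<open>\<open>\<Sum>i. min (d i) m\<close> is the sum of the first \<open>m\<close> parts of the conjugate partition, and
  conjugation reverses the dominance order.\<close>

lemma dominatesI_sum_min:
  fixes d e :: "nat \<Rightarrow> nat"
  assumes antimono: "\<And>i j. i \<le> j \<Longrightarrow> d j \<le> d i"
    and d_vanish: "\<And>i. N \<le> i \<Longrightarrow> d i = 0" and e_vanish: "\<And>i. N \<le> i \<Longrightarrow> e i = 0"
    and total: "(\<Sum>i<N. e i) = (\<Sum>i<N. d i)"
    and sum_min: "\<And>m. (\<Sum>i<N. min (d i) m) \<le> (\<Sum>i<N. min (e i) m)"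
  shows "dominates d e"
  unfolding dominates_def
proof
  fix j
  define m where "m = d (j - 1)"
  define M where "M = max j N"
  have extend: "(\<Sum>i<M. f i) = (\<Sum>i<N. f i)" if "\<And>i. N \<le> i \<Longrightarrow> f i = 0" for f :: "nat \<Rightarrow> nat"
    by (rule sum.mono_neutral_right) (use that in \<open>auto simp: M_def\<close>)
  have split: "(\<Sum>i<M. f i) = (\<Sum>i<M. min (f i) m) + (\<Sum>i<M. f i - m)" for f :: "nat \<Rightarrow> nat"
    by (subst sum.distrib[symmetric]) (rule sum.cong, auto)
  have "(\<Sum>i<M. e i - m) \<le> (\<Sum>i<M. d i - m)"
    using split[of d] split[of e] total sum_min[of m] extend[of d] extend[of e]
      extend[of "\<lambda>i. min (d i) m"] extend[of "\<lambda>i. min (e i) m"] d_vanish e_vanish by simp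
  moreover have "(\<Sum>i<M. d i - m) = (\<Sum>i<j. d i - m)"
    by (rule sum.mono_neutral_right) (use antimono[of "j - 1"] in \<open>auto simp: M_def m_def\<close>)
  moreover have "(\<Sum>i<j. e i - m) \<le> (\<Sum>i<M. e i - m)"
    by (rule sum_mono2) (auto simp: M_def)
  moreover have "(\<Sum>i<j. e i) \<le> (\<Sum>i<j. m + (e i - m))"
    by (intro sum_mono) auto
  moreover have "(\<Sum>i<j. m + (d i - m)) = (\<Sum>i<j. d i)"
    by (intro sum.cong) (use antimono[of _ "j - 1"] in \<open>auto simp: m_def\<close>)
  ultimately show "(\<Sum>i<j. e i) \<le> (\<Sum>i<j. d i)"
    by (simp add: sum.distrib)
qed

section \<open>Segre characteristics and degree sequences\<close>

lemma seq_term_eq_0: "size S \<le> i \<Longrightarrow> seq_term S i = 0"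
  unfolding seq_term_def by simp

lemma seq_term_antimono:
  assumes "i \<le> j"
  shows "seq_term S j \<le> seq_term S i"
proof (cases "j < size S")
  case True
  let ?xs = "sorted_list_of_multiset S"
  have len: "length ?xs = size S"
    by (metis mset_sorted_list_of_multiset size_mset)
  have "?xs ! (size S - Suc j) \<le> ?xs ! (size S - Suc i)"
    by (rule sorted_nth_mono) (use True assms len in auto)
  then show ?thesis
    using True assms len unfolding seq_term_def by (simp add: rev_nth)
qed (simp add: seq_term_def)

lemma sum_seq_term:
  fixes f :: "nat \<Rightarrow> 'a::comm_monoid_add"
  assumes "f 0 = 0" and "size S \<le> N"
  shows "(\<Sum>i<N. f (seq_term S i)) = (\<Sum>s\<in>#S. f s)"
proof -
  let ?xs = "rev (sorted_list_of_multiset S)"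
  have len: "length ?xs = size S"
    by (metis length_rev mset_sorted_list_of_multiset size_mset)
  have "(\<Sum>i<N. f (seq_term S i)) = (\<Sum>i<length ?xs. f (?xs ! i))"
    using assms len by (intro sum.mono_neutral_cong_right) (auto simp: seq_term_def)
  also have "\<dots> = sum_list (map f ?xs)"
    by (simp add: sum_list_sum_nth atLeast0LessThan)
  also have "\<dots> = (\<Sum>s\<in>#mset ?xs. f s)"
    by (metis mset_map sum_mset_sum_list)
  finally show ?thesis by simp
qed

lemma deg_seq_conv_sum: "deg_seq Ss i = (\<Sum>l<length Ss. seq_term (Ss ! l) i)"
  unfolding deg_seq_def by (simp add: sum_list_sum_nth atLeast0LessThan)

lemma deg_seq_antimono: "i \<le> j \<Longrightarrow> deg_seq Ss j \<le> deg_seq Ss i"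
  unfolding deg_seq_conv_sum by (intro sum_mono seq_term_antimono)

lemma size_le_sum_mset: "0 \<notin># S \<Longrightarrow> size S \<le> sum_mset (S :: nat multiset)"
  by (induction S) (auto simp: Suc_le_eq)

lemma valid_bundle_data_size_le:
  assumes "valid_bundle_data n Ss" and "S \<in> set Ss"
  shows "size S \<le> n"
proof -
  have "size S \<le> sum_mset S"
    using assms unfolding valid_bundle_data_def by (intro size_le_sum_mset) auto
  also have "\<dots> \<le> (\<Sum>S\<leftarrow>Ss. sum_mset S)"
    using assms(2) by (intro member_le_sum_list) auto
  finally show ?thesis
    using assms(1) unfolding valid_bundle_data_def by simp
qed

lemma deg_seq_eq_0:
  assumes "valid_bundle_data n Ss" and "n \<le> i"
  shows "deg_seq Ss i = 0"
proof -
  have "seq_term S i = 0" if "S \<in> set Ss" for S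
    using valid_bundle_data_size_le[OF assms(1) that] assms(2) by (simp add: seq_term_eq_0)
  then show ?thesis
    unfolding deg_seq_def by (simp add: sum_list_eq_0_iff)
qed

lemma sum_deg_seq:
  assumes "valid_bundle_data n Ss"
  shows "(\<Sum>i<n. deg_seq Ss i) = n"
proof -
  have "(\<Sum>i<n. deg_seq Ss i) = (\<Sum>l<length Ss. \<Sum>i<n. seq_term (Ss ! l) i)"
    unfolding deg_seq_conv_sum by (rule sum.swap)
  also have "\<dots> = (\<Sum>l<length Ss. sum_mset (Ss ! l))"
    using sum_seq_term[of id] valid_bundle_data_size_le[OF assms] by (intro sum.cong) auto
  also have "\<dots> = n"
    using assms unfolding valid_bundle_data_def by (simp add: sum_list_sum_nth atLeast0LessThan)
  finally show ?thesis .
qed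

section \<open>Nullity of polynomials in a matrix\<close>

text \<open>\<open>char_matrix_prod A \<mu>s\<close> is \<open>p(A)\<close> for the monic polynomial \<open>p\<close> with list of roots \<open>\<mu>s\<close>.\<close>

definition char_matrix_prod :: "'a::field mat \<Rightarrow> 'a list \<Rightarrow> 'a mat" where
  "char_matrix_prod A \<mu>s = foldr (\<lambda>\<mu> M. char_matrix A \<mu> * M) \<mu>s (1\<^sub>m (dim_row A))"

lemma char_matrix_prod_Nil [simp]: "char_matrix_prod A [] = 1\<^sub>m (dim_row A)"
  by (simp add: char_matrix_prod_def)

lemma char_matrix_prod_Cons [simp]:
  "char_matrix_prod A (\<mu> # \<mu>s) = char_matrix A \<mu> * char_matrix_prod A \<mu>s"
  by (simp add: char_matrix_prod_def)

lemma char_matrix_carrier [simp]: "A \<in> carrier_mat n n \<Longrightarrow> char_matrix A e \<in> carrier_mat n n"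
  unfolding char_matrix_def by auto

lemma char_matrix_prod_carrier [simp]: "A \<in> carrier_mat n n \<Longrightarrow> char_matrix_prod A \<mu>s \<in> carrier_mat n n"
  by (induction \<mu>s) (auto intro!: mult_carrier_mat)

lemma similar_mat_wit_mult:
  assumes AB: "similar_mat_wit A B P Q" and CD: "similar_mat_wit C D P Q"
  shows "similar_mat_wit (A * C) (B * D) P Q"
proof -
  define n where "n = dim_row A"
  note ab = similar_mat_witD[OF n_def AB]
  have "dim_row C = n"
    using ab CD unfolding similar_mat_wit_def Let_def by auto
  note cd = similar_mat_witD[OF this[symmetric] CD]
  have QP: "Q * (P * X) = X" if "X \<in> carrier_mat n n" for X
    using assoc_mult_mat[OF ab(7) ab(6) that] ab(2) that by simp
  have "A * C = P * (B * D) * Q"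
    using ab cd by (simp add: assoc_mult_mat[of _ n n _ n _ n] QP)
  then show ?thesis
    using ab cd by (intro similar_mat_witI[of _ _ n]) auto
qed

lemma similar_mat_wit_char_matrix_prod:
  assumes "similar_mat_wit A B P Q"
  shows "similar_mat_wit (char_matrix_prod A \<mu>s) (char_matrix_prod B \<mu>s) P Q"
proof (induction \<mu>s)
  case Nil
  show ?case using similar_mat_wit_pow[OF assms, of 0] by simp
next
  case (Cons \<mu> \<mu>s)
  show ?case
    using similar_mat_wit_mult[OF similar_mat_wit_char_matrix[OF assms] Cons] by simp
qed

lemma char_matrix_prod_four_block_0:
  assumes A: "A \<in> carrier_mat n1 n1" and D: "D \<in> carrier_mat n2 n2"
  shows "char_matrix_prod (four_block_mat A (0\<^sub>m n1 n2) (0\<^sub>m n2 n1) D) \<mu>s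
    = four_block_mat (char_matrix_prod A \<mu>s) (0\<^sub>m n1 n2) (0\<^sub>m n2 n1) (char_matrix_prod D \<mu>s)"
proof (induction \<mu>s)
  case Nil
  show ?case using A D by (intro eq_matI) auto
next
  case (Cons \<mu> \<mu>s)
  have char: "char_matrix (four_block_mat A (0\<^sub>m n1 n2) (0\<^sub>m n2 n1) D) \<mu>
    = four_block_mat (char_matrix A \<mu>) (0\<^sub>m n1 n2) (0\<^sub>m n2 n1) (char_matrix D \<mu>)"
    using A D unfolding char_matrix_def by (intro eq_matI) auto
  have carrier: "char_matrix A \<mu> \<in> carrier_mat n1 n1" "char_matrix D \<mu> \<in> carrier_mat n2 n2"
    "char_matrix_prod A \<mu>s \<in> carrier_mat n1 n1" "char_matrix_prod D \<mu>s \<in> carrier_mat n2 n2"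
    using A D by simp_all
  show ?case
    unfolding char_matrix_prod_Cons Cons char
    by (subst mult_four_block_mat[OF carrier(1) zero_carrier_mat zero_carrier_mat carrier(2)
        carrier(3) zero_carrier_mat zero_carrier_mat carrier(4)]) (use carrier in simp)
qed

lemma jordan_block_eq_zero_plus: "jordan_block s (a::'a::field) = jordan_block s 0 + a \<cdot>\<^sub>m 1\<^sub>m s"
  by (rule eq_matI) auto

lemma pow_mat_commute:
  assumes "(N::'a::semiring_1 mat) \<in> carrier_mat s s"
  shows "N * N ^\<^sub>m c = N ^\<^sub>m c * N"
proof (induction c)
  case (Suc c)
  have "N * N ^\<^sub>m Suc c = (N * N ^\<^sub>m c) * N"
    using assms by (simp add: assoc_mult_mat[of _ s s _ s _ s])
  then show ?case by (simp add: Suc)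
qed (use assms in simp)

lemma jordan_block_commute_pow:
  "jordan_block s (a::'a::field) * jordan_block s 0 ^\<^sub>m c = jordan_block s 0 ^\<^sub>m c * jordan_block s a"
proof -
  let ?N = "jordan_block s (0::'a)"
  have N: "?N \<in> carrier_mat s s" and P: "?N ^\<^sub>m c \<in> carrier_mat s s"
    by simp_all
  have "jordan_block s a * ?N ^\<^sub>m c = ?N * ?N ^\<^sub>m c + a \<cdot>\<^sub>m ?N ^\<^sub>m c"
    by (subst jordan_block_eq_zero_plus, subst add_mult_distrib_mat[OF N _ P]) (use P in auto)
  also have "\<dots> = ?N ^\<^sub>m c * ?N + ?N ^\<^sub>m c * (a \<cdot>\<^sub>m 1\<^sub>m s)"
    using pow_mat_commute[OF N] mult_smult_distrib[OF P one_carrier_mat, of a] P by simp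
  also have "\<dots> = ?N ^\<^sub>m c * jordan_block s a"
    by (subst (2) jordan_block_eq_zero_plus, subst mult_add_distrib_mat[OF P N]) auto
  finally show ?thesis .
qed

lemma jordan_block_right_inverse:
  assumes "(a::'a::field) \<noteq> 0"
  obtains C where "C \<in> carrier_mat s s" "jordan_block s a * C = 1\<^sub>m s"
proof -
  have "upper_triangular (jordan_block s a)"
    unfolding upper_triangular_def by auto
  then have "det (jordan_block s a) = prod_list (diag_mat (jordan_block s a))"
    by (rule det_upper_triangular[OF _ jordan_block_carrier])
  also have "diag_mat (jordan_block s a) = replicate s a"
    unfolding diag_mat_def by (rule nth_equalityI) auto
  finally have "det (jordan_block s a) = a ^ s"
    by simp
  then have "det (jordan_block s a) \<noteq> 0"
    using assms by simp
  from det_non_zero_imp_unit[OF jordan_block_carrier this] that show thesis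
    by (auto simp: Units_def ring_mat_def)
qed

text \<open>On a single Jordan block the factors \<open>J - \<mu>\<close> with \<open>\<mu> \<noteq> e\<close> are invertible and commute
  with the nilpotent part, so only the multiplicity of \<open>e\<close> in \<open>\<mu>s\<close> matters.\<close>

lemma char_matrix_prod_jordan_block:
  "\<exists>U C. U \<in> carrier_mat s s \<and> C \<in> carrier_mat s s \<and> U * C = 1\<^sub>m s \<and>
     char_matrix_prod (jordan_block s (e::'a::field)) \<mu>s = jordan_block s 0 ^\<^sub>m count (mset \<mu>s) e * U"
proof (induction \<mu>s)
  case Nil
  show ?case by (intro exI[of _ "1\<^sub>m s"]) simp
next
  case (Cons \<mu> \<mu>s)
  then obtain U C where U: "U \<in> carrier_mat s s" and C: "C \<in> carrier_mat s s" and "U * C = 1\<^sub>m s"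
    and IH: "char_matrix_prod (jordan_block s e) \<mu>s = jordan_block s 0 ^\<^sub>m count (mset \<mu>s) e * U"
    by blast
  let ?N = "jordan_block s (0::'a)" and ?c = "count (mset \<mu>s) e" and ?J = "jordan_block s (e - \<mu>)"
  have N: "?N \<in> carrier_mat s s" and P: "?N ^\<^sub>m ?c \<in> carrier_mat s s" and J: "?J \<in> carrier_mat s s"
    by simp_all
  have step: "char_matrix_prod (jordan_block s e) (\<mu> # \<mu>s) = ?J * ?N ^\<^sub>m ?c * U"
    using IH J P U by (simp add: char_matrix_jordan_block assoc_mult_mat[of _ s s _ s _ s])
  show ?case
  proof (cases "\<mu> = e")
    case True
    then show ?thesis
      using step pow_mat_commute[OF N, of ?c] U C \<open>U * C = 1\<^sub>m s\<close> by auto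
  next
    case False
    obtain C' where C': "C' \<in> carrier_mat s s" "?J * C' = 1\<^sub>m s"
      using jordan_block_right_inverse[of "e - \<mu>"] False by auto
    have "(?J * U) * (C * C') = ?J * (U * C) * C'"
      using J U C C' by (simp add: assoc_mult_mat[of _ s s _ s _ s])
    then have "(?J * U) * (C * C') = 1\<^sub>m s"
      using \<open>U * C = 1\<^sub>m s\<close> J C' by simp
    moreover have "?J * ?N ^\<^sub>m ?c * U = ?N ^\<^sub>m ?c * (?J * U)"
      using J P U by (simp add: jordan_block_commute_pow assoc_mult_mat[of _ s s _ s _ s])
    ultimately show ?thesis
      using step False J U C C' by (intro exI[of _ "?J * U"] exI[of _ "C * C'"]) auto
  qed
qed

lemma kernel_dim_char_matrix_prod_jordan_block:
  "kernel_dim (char_matrix_prod (jordan_block s (e::'a::field)) \<mu>s) = min (count (mset \<mu>s) e) s"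
proof -
  obtain U C where UC: "U \<in> carrier_mat s s" "C \<in> carrier_mat s s" "U * C = 1\<^sub>m s"
    and eq: "char_matrix_prod (jordan_block s e) \<mu>s = jordan_block s 0 ^\<^sub>m count (mset \<mu>s) e * U"
    using char_matrix_prod_jordan_block by blast
  have "kernel.dim s (jordan_block s 0 ^\<^sub>m count (mset \<mu>s) e * U)
    = kernel.dim s (jordan_block s (0::'a) ^\<^sub>m count (mset \<mu>s) e)"
    by (rule mat_kernel_dim_mult_eq_right[OF pow_carrier_mat[OF jordan_block_carrier] UC])
  then show ?thesis
    using UC unfolding kernel_dim_def eq by (simp add: dim_kernel_zero_jordan_block_pow)
qed

lemma kernel_dim_char_matrix_prod_jordan_matrix:
  "kernel_dim (char_matrix_prod (jordan_matrix n_as) \<mu>s)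
    = (\<Sum>(s, e)\<leftarrow>n_as. min (count (mset \<mu>s) (e::'a::field)) s)"
proof (induction n_as)
  case Nil
  have "char_matrix_prod (jordan_matrix ([] :: (nat \<times> 'a) list)) \<mu>s \<in> carrier_mat 0 0"
    using char_matrix_prod_carrier[OF jordan_matrix_carrier, of "[] :: (nat \<times> 'a) list"] by simp
  then have "char_matrix_prod (jordan_matrix ([] :: (nat \<times> 'a) list)) \<mu>s = 1\<^sub>m 0"
    by (intro eq_matI) auto
  then show ?case
    using kernel_one_mat(1)[of 0] by (simp add: kernel_dim_def)
next
  case (Cons se n_as)
  obtain s e where se: "se = (s, e)" by force
  let ?m = "sum_list (map fst n_as)"
  have J: "jordan_matrix n_as \<in> carrier_mat ?m ?m" and B: "jordan_block s e \<in> carrier_mat s s"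
    by simp_all
  have "char_matrix_prod (jordan_matrix (se # n_as)) \<mu>s = four_block_mat (char_matrix_prod (jordan_block s e) \<mu>s)
      (0\<^sub>m s ?m) (0\<^sub>m ?m s) (char_matrix_prod (jordan_matrix n_as) \<mu>s)"
    unfolding se jordan_matrix_Cons by (rule char_matrix_prod_four_block_0[OF B J])
  moreover have "dim_col (char_matrix_prod (jordan_matrix (se # n_as)) \<mu>s) = s + ?m"
    using char_matrix_prod_carrier[OF jordan_matrix_carrier, of "se # n_as" \<mu>s] se by simp
  ultimately have "kernel_dim (char_matrix_prod (jordan_matrix (se # n_as)) \<mu>s)
    = kernel.dim s (char_matrix_prod (jordan_block s e) \<mu>s)
      + kernel.dim ?m (char_matrix_prod (jordan_matrix n_as) \<mu>s)"
    unfolding kernel_dim_def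
    by (simp add: kernel_four_block_0_mat[OF _ char_matrix_prod_carrier[OF B] char_matrix_prod_carrier[OF J]])
  then show ?case
    using Cons kernel_dim_char_matrix_prod_jordan_block[of s e \<mu>s]
      carrier_matD[OF char_matrix_prod_carrier[OF B]] carrier_matD[OF char_matrix_prod_carrier[OF J]]
    by (simp add: se kernel_dim_def)
qed

lemma kernel_dim_char_matrix_prod_jordan_nf:
  assumes A: "A \<in> carrier_mat n n" and "jordan_nf A n_as"
  shows "kernel_dim (char_matrix_prod A \<mu>s) = (\<Sum>(s, e)\<leftarrow>n_as. min (count (mset \<mu>s) (e::'a::field)) s)"
proof -
  obtain P Q where wit: "similar_mat_wit A (jordan_matrix n_as) P Q"
    using assms(2) unfolding jordan_nf_def similar_mat_def by auto
  then have J: "jordan_matrix n_as \<in> carrier_mat n n"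
    using A similar_mat_witD(5)[OF _ wit] by auto
  have "kernel.dim n (char_matrix_prod A \<mu>s) = kernel.dim n (char_matrix_prod (jordan_matrix n_as) \<mu>s)"
    by (rule similar_mat_wit_kernel_dim[OF char_matrix_prod_carrier[OF A]
          similar_mat_wit_char_matrix_prod[OF wit]])
  moreover have "dim_col (char_matrix_prod A \<mu>s) = n" "dim_col (char_matrix_prod (jordan_matrix n_as) \<mu>s) = n"
    using char_matrix_prod_carrier[OF A] char_matrix_prod_carrier[OF J] by auto
  ultimately show ?thesis
    using kernel_dim_char_matrix_prod_jordan_matrix[of n_as \<mu>s] by (simp add: kernel_dim_def)
qed

section \<open>Limits of matrices and semicontinuity of the nullity\<close>

lemma convergent_subsequence_real:
  fixes f :: "nat \<Rightarrow> real"
  assumes "\<And>k. \<bar>f k\<bar> \<le> C"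
  shows "\<exists>\<sigma> l. strict_mono \<sigma> \<and> (\<lambda>k. f (\<sigma> k)) \<longlonglongrightarrow> l"
proof -
  obtain \<sigma> where \<sigma>: "strict_mono \<sigma>" "monoseq (\<lambda>k. f (\<sigma> k))"
    using seq_monosub by blast
  have "Bseq (\<lambda>k. f (\<sigma> k))"
    using assms by (intro BseqI'[of _ C]) auto
  then show ?thesis
    using \<sigma> Bseq_monoseq_convergent unfolding convergent_def by blast
qed

lemma convergent_subsequence_complex:
  fixes f :: "nat \<Rightarrow> complex"
  assumes "\<And>k. cmod (f k) \<le> C"
  shows "\<exists>\<sigma> l. strict_mono \<sigma> \<and> (\<lambda>k. f (\<sigma> k)) \<longlonglongrightarrow> l"
proof -
  obtain \<sigma> a where \<sigma>: "strict_mono \<sigma>" "(\<lambda>k. Re (f (\<sigma> k))) \<longlonglongrightarrow> a"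
    using convergent_subsequence_real[of "\<lambda>k. Re (f k)" C] assms abs_Re_le_cmod order_trans by blast
  obtain \<tau> b where \<tau>: "strict_mono \<tau>" "(\<lambda>k. Im (f (\<sigma> (\<tau> k)))) \<longlonglongrightarrow> b"
    using convergent_subsequence_real[of "\<lambda>k. Im (f (\<sigma> k))" C] assms abs_Im_le_cmod order_trans by blast
  have "(\<lambda>k. Re (f (\<sigma> (\<tau> k)))) \<longlonglongrightarrow> a"
    using LIMSEQ_subseq_LIMSEQ[OF \<sigma>(2) \<tau>(1)] by (simp add: o_def)
  then have "(\<lambda>k. f (\<sigma> (\<tau> k))) \<longlonglongrightarrow> Complex a b"
    using \<tau>(2) by (simp add: tendsto_complex_iff)
  then show ?thesis
    using strict_mono_o[OF \<sigma>(1) \<tau>(1)] by (auto simp: o_def)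
qed

lemma convergent_subsequence_finite:
  fixes F :: "nat \<Rightarrow> 'i \<Rightarrow> complex"
  assumes "finite I" and "\<And>k c. c \<in> I \<Longrightarrow> cmod (F k c) \<le> C"
  shows "\<exists>\<sigma> g. strict_mono \<sigma> \<and> (\<forall>c\<in>I. (\<lambda>k. F (\<sigma> k) c) \<longlonglongrightarrow> g c)"
  using assms
proof (induction I rule: finite_induct)
  case empty
  show ?case using strict_mono_id by blast
next
  case (insert x I)
  then obtain \<sigma> g where \<sigma>: "strict_mono \<sigma>" "\<forall>c\<in>I. (\<lambda>k. F (\<sigma> k) c) \<longlonglongrightarrow> g c"
    by auto
  obtain \<tau> l where \<tau>: "strict_mono \<tau>" "(\<lambda>k. F (\<sigma> (\<tau> k)) x) \<longlonglongrightarrow> l"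
    using convergent_subsequence_complex[of "\<lambda>k. F (\<sigma> k) x" C] insert.prems by auto
  have "(\<lambda>k. F (\<sigma> (\<tau> k)) c) \<longlonglongrightarrow> (g(x := l)) c" if "c \<in> insert x I" for c
    using \<tau>(2) LIMSEQ_subseq_LIMSEQ[OF bspec[OF \<sigma>(2)] \<tau>(1)] that by (auto simp: o_def)
  then show ?case
    using strict_mono_o[OF \<sigma>(1) \<tau>(1)]
    by (intro exI[of _ "\<sigma> \<circ> \<tau>"] exI[of _ "g(x := l)"]) (auto simp: o_def)
qed

definition mat_tendsto :: "nat \<Rightarrow> (nat \<Rightarrow> complex mat) \<Rightarrow> complex mat \<Rightarrow> bool" where
  "mat_tendsto n X A \<longleftrightarrow> (\<forall>i<n. \<forall>j<n. (\<lambda>k. X k $$ (i, j)) \<longlonglongrightarrow> A $$ (i, j))"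

lemma mat_tendsto_subseq:
  assumes "mat_tendsto n X A" and "strict_mono \<sigma>"
  shows "mat_tendsto n (\<lambda>k. X (\<sigma> k)) A"
  unfolding mat_tendsto_def
proof (intro allI impI)
  fix i j
  assume "i < n" "j < n"
  then have "(\<lambda>k. X k $$ (i, j)) \<longlonglongrightarrow> A $$ (i, j)"
    using assms(1) unfolding mat_tendsto_def by blast
  from LIMSEQ_subseq_LIMSEQ[OF this assms(2)]
  show "(\<lambda>k. X (\<sigma> k) $$ (i, j)) \<longlonglongrightarrow> A $$ (i, j)"
    by (simp add: o_def)
qed

lemma index_mult_mat_sum:
  assumes "A \<in> carrier_mat nr n" and "B \<in> carrier_mat n nc" and "i < nr" and "j < nc"
  shows "(A * B) $$ (i, j) = (\<Sum>l<n. A $$ (i, l) * B $$ (l, j))"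
  using assms by (auto simp: scalar_prod_def lessThan_atLeast0 intro!: sum.cong)

lemma index_mult_mat_vec_sum:
  assumes "A \<in> carrier_mat nr n" and "v \<in> carrier_vec n" and "i < nr"
  shows "(A *\<^sub>v v) $ i = (\<Sum>l<n. A $$ (i, l) * v $ l)"
  using assms by (auto simp: scalar_prod_def lessThan_atLeast0 intro!: sum.cong)

lemma mult_mat_vec_zero:
  assumes "A \<in> carrier_mat nr nc"
  shows "A *\<^sub>v 0\<^sub>v nc = 0\<^sub>v nr"
  using assms by (intro eq_vecI) (simp_all add: index_mult_mat_vec_sum[OF assms zero_carrier_vec])

lemma mat_tendsto_mult:
  assumes "\<And>k. X k \<in> carrier_mat n n" and "\<And>k. Y k \<in> carrier_mat n n"
    and "A \<in> carrier_mat n n" and "B \<in> carrier_mat n n"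
    and "mat_tendsto n X A" and "mat_tendsto n Y B"
  shows "mat_tendsto n (\<lambda>k. X k * Y k) (A * B)"
  unfolding mat_tendsto_def
proof (intro allI impI)
  fix i j
  assume ij: "i < n" "j < n"
  have "(\<lambda>k. \<Sum>l<n. X k $$ (i, l) * Y k $$ (l, j)) \<longlonglongrightarrow> (\<Sum>l<n. A $$ (i, l) * B $$ (l, j))"
    using assms(5,6) ij unfolding mat_tendsto_def by (intro tendsto_intros) auto
  then show "(\<lambda>k. (X k * Y k) $$ (i, j)) \<longlonglongrightarrow> (A * B) $$ (i, j)"
    using index_mult_mat_sum[OF assms(1,2) ij] index_mult_mat_sum[OF assms(3,4) ij] by simp
qed

lemma mat_tendsto_char_matrix:
  assumes "\<And>k. X k \<in> carrier_mat n n" and "A \<in> carrier_mat n n"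
    and "mat_tendsto n X A" and "f \<longlonglongrightarrow> e"
  shows "mat_tendsto n (\<lambda>k. char_matrix (X k) (f k)) (char_matrix A e)"
  unfolding mat_tendsto_def
proof (intro allI impI)
  fix i j
  assume ij: "i < n" "j < n"
  have "(\<lambda>k. X k $$ (i, j) - (if i = j then f k else 0)) \<longlonglongrightarrow> A $$ (i, j) - (if i = j then e else 0)"
    using assms(3,4) ij unfolding mat_tendsto_def by (intro tendsto_intros) auto
  then show "(\<lambda>k. char_matrix (X k) (f k) $$ (i, j)) \<longlonglongrightarrow> char_matrix A e $$ (i, j)"
    using ij carrier_matD[OF assms(1)] carrier_matD[OF assms(2)]
    by (cases "i = j") (simp_all add: char_matrix_def)
qed

lemma mat_tendsto_char_matrix_prod:
  assumes X: "\<And>k. X k \<in> carrier_mat n n" and A: "A \<in> carrier_mat n n" and "mat_tendsto n X A"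
    and "\<And>k. length (\<mu>s k) = length \<mu>"
    and "\<And>r. r < length \<mu> \<Longrightarrow> (\<lambda>k. \<mu>s k ! r) \<longlonglongrightarrow> \<mu> ! r"
  shows "mat_tendsto n (\<lambda>k. char_matrix_prod (X k) (\<mu>s k)) (char_matrix_prod A \<mu>)"
  using assms(4,5)
proof (induction \<mu> arbitrary: \<mu>s)
  case Nil
  then have "char_matrix_prod (X k) (\<mu>s k) = 1\<^sub>m n" for k
    using carrier_matD(1)[OF X] by simp
  then show ?case
    using carrier_matD(1)[OF A] by (simp add: mat_tendsto_def)
next
  case (Cons \<nu> \<mu>)
  have split: "\<mu>s k = \<mu>s k ! 0 # tl (\<mu>s k)" for k
    using Cons.prems(1)[of k] by (cases "\<mu>s k") auto
  have "(\<lambda>k. tl (\<mu>s k) ! r) \<longlonglongrightarrow> \<mu> ! r" if "r < length \<mu>" for r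
    using Cons.prems(2)[of "Suc r"] Cons.prems(1) that by (simp add: nth_tl)
  then have "mat_tendsto n (\<lambda>k. char_matrix_prod (X k) (tl (\<mu>s k))) (char_matrix_prod A \<mu>)"
    using Cons.prems(1) by (intro Cons.IH) auto
  moreover have "mat_tendsto n (\<lambda>k. char_matrix (X k) (\<mu>s k ! 0)) (char_matrix A \<nu>)"
    using Cons.prems(2)[of 0] by (intro mat_tendsto_char_matrix[OF X A \<open>mat_tendsto n X A\<close>]) simp
  ultimately show ?case
    using X A by (subst split) (simp add: mat_tendsto_mult[of _ n])
qed

lemma eigenvalue_norm_le_sum_entries:
  assumes A: "A \<in> carrier_mat n n" and "eigenvalue A e"
  shows "cmod e \<le> (\<Sum>i<n. \<Sum>j<n. cmod (A $$ (i, j)))"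
proof -
  obtain v where v: "v \<in> carrier_vec n" "v \<noteq> 0\<^sub>v n" "A *\<^sub>v v = e \<cdot>\<^sub>v v"
    using assms unfolding eigenvalue_def eigenvector_def by auto
  obtain r where r: "r < n" "v $ r \<noteq> 0"
    using v(1,2) by (metis eq_vecI carrier_vecD index_zero_vec)
  have "Max ((\<lambda>l. cmod (v $ l)) ` {..<n}) \<in> (\<lambda>l. cmod (v $ l)) ` {..<n}"
    using r(1) by (intro Max_in) auto
  then obtain i where i: "i < n" "cmod (v $ i) = Max ((\<lambda>l. cmod (v $ l)) ` {..<n})"
    by auto
  have max: "cmod (v $ l) \<le> cmod (v $ i)" if "l < n" for l
    using i(2) that by simp
  have "cmod e * cmod (v $ i) = cmod (\<Sum>l<n. A $$ (i, l) * v $ l)"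
    using v(1,3) i(1) index_mult_mat_vec_sum[OF A v(1) i(1)] by (metis index_smult_vec norm_mult carrier_vecD)
  also have "\<dots> \<le> (\<Sum>l<n. cmod (A $$ (i, l)) * cmod (v $ i))"
    by (rule order_trans[OF norm_sum sum_mono]) (simp add: norm_mult max mult_left_mono)
  also have "\<dots> \<le> (\<Sum>i<n. \<Sum>j<n. cmod (A $$ (i, j))) * cmod (v $ i)"
    unfolding sum_distrib_right[symmetric]
    using i(1) by (intro mult_right_mono member_le_sum) (auto intro: sum_nonneg)
  finally have "cmod e * cmod (v $ i) \<le> (\<Sum>i<n. \<Sum>j<n. cmod (A $$ (i, j))) * cmod (v $ i)" .
  moreover have "v $ i \<noteq> 0"
    using max[OF r(1)] r(2) by auto
  ultimately show ?thesis
    by (simp add: mult_le_cancel_right)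
qed

lemma eigenvalues_bounded_if_mat_tendsto:
  assumes X: "\<And>k. X k \<in> carrier_mat n n" and "mat_tendsto n X B"
  obtains K where "0 \<le> K" "\<And>k e. eigenvalue (X k) e \<Longrightarrow> cmod e \<le> K"
proof -
  have "(\<lambda>k. \<Sum>i<n. \<Sum>j<n. cmod (X k $$ (i, j))) \<longlonglongrightarrow> (\<Sum>i<n. \<Sum>j<n. cmod (B $$ (i, j)))"
    using assms(2) unfolding mat_tendsto_def by (intro tendsto_intros) auto
  then have "Bseq (\<lambda>k. \<Sum>i<n. \<Sum>j<n. cmod (X k $$ (i, j)))"
    by (rule convergent_imp_Bseq[OF convergentI])
  then obtain K where K: "\<And>k. norm (\<Sum>i<n. \<Sum>j<n. cmod (X k $$ (i, j))) \<le> K"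
    unfolding Bseq_def by blast
  have "cmod e \<le> K" if "eigenvalue (X k) e" for k e
    by (rule order_trans[OF eigenvalue_norm_le_sum_entries[OF X that] order_trans[OF _ K[of k]]]) simp
  moreover have "0 \<le> K"
    by (rule order_trans[OF norm_ge_zero K])
  ultimately show thesis
    using that by blast
qed

definition orthonormal :: "complex vec list \<Rightarrow> bool" where
  "orthonormal ws \<longleftrightarrow> (\<forall>i<length ws. \<forall>j<length ws. ws ! i \<bullet>c ws ! j = (if i = j then 1 else 0))"

lemma cscalar_prod_conv_sum:
  "v \<in> carrier_vec n \<Longrightarrow> u \<bullet>c v = (\<Sum>r<n. u $ r * cnj (v $ r))"
  by (auto simp: scalar_prod_def lessThan_atLeast0 intro!: sum.cong)

lemma cscalar_prod_self:
  "u \<in> carrier_vec n \<Longrightarrow> u \<bullet>c u = of_real (\<Sum>r<n. (cmod (u $ r))\<^sup>2)"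
  by (simp only: cscalar_prod_conv_sum of_real_sum complex_norm_square)

lemma cmod_index_le_1_if_unit:
  assumes "w \<in> carrier_vec n" and "w \<bullet>c w = 1" and "r < n"
  shows "cmod (w $ r) \<le> 1"
proof -
  have "(cmod (w $ r))\<^sup>2 \<le> (\<Sum>r<n. (cmod (w $ r))\<^sup>2)"
    using assms(3) by (intro member_le_sum) auto
  also have "\<dots> = 1"
    using assms(1,2) cscalar_prod_self[OF assms(1)] by (metis of_real_eq_1_iff)
  finally show ?thesis
    by (simp add: power_le_one_iff)
qed

lemma length_le_kernel_dim_if_corthogonal:
  fixes ws :: "complex vec list"
  assumes M: "M \<in> carrier_mat n n" and ws: "set ws \<subseteq> mat_kernel M" and "corthogonal ws"
  shows "length ws \<le> kernel_dim M"
proof -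
  interpret K: kernel n n M by (unfold_locales) (rule M)
  have carrier: "set ws \<subseteq> carrier_vec n"
    using ws M mat_kernel_carrier by blast
  have "distinct ws"
    using \<open>corthogonal ws\<close> by (rule corthogonal_distinct)
  text \<open>The columns of \<open>mat_of_cols n ws\<close> have a left inverse, so no nontrivial combination vanishes.\<close>
  have left_inverse: "mat_of_rows n (map vec_inv ws) * mat_of_cols n ws = 1\<^sub>m (length ws)"
    using corthogonal_inv[OF \<open>corthogonal ws\<close> carrier] unfolding inverts_mat_def by simp
  have "\<not> module.lin_dep class_ring (module_vec TYPE(complex) n) (set ws)"
  proof
    assume "module.lin_dep class_ring (module_vec TYPE(complex) n) (set ws)"
    moreover have "cols (mat_of_cols n ws) = ws"
      using carrier by (simp add: cols_mat_of_cols)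
    ultimately obtain v where v: "v \<in> carrier_vec (length ws)" "v \<noteq> 0\<^sub>v (length ws)"
      and "mat_of_cols n ws *\<^sub>v v = 0\<^sub>v n"
      using vec_space.lin_depE[OF mat_of_cols_carrier(1), of n ws] \<open>distinct ws\<close> by metis
    then have "(mat_of_rows n (map vec_inv ws) * mat_of_cols n ws) *\<^sub>v v = 0\<^sub>v (length ws)"
      using mult_mat_vec_zero[OF mat_of_rows_carrier(1)[of n "map vec_inv ws"]]
      by (subst assoc_mult_mat_vec[of _ _ n _ "length ws"]) auto
    then show False
      using v left_inverse by simp
  qed
  then have "K.lin_indpt (set ws)"
    using K.lindep_same[OF ws] by simp
  moreover obtain B where "finite B" "K.basis B"
    using kernel_basis_exists[OF M] by blast
  then have "K.Ker.fin_dim"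
    unfolding K.Ker.fin_dim_def K.Ker.basis_def by blast
  ultimately have "card (set ws) \<le> K.dim"
    using K.Ker.li_le_dim(2)[OF _ ws] by blast
  then show ?thesis
    using distinct_card[OF \<open>distinct ws\<close>] by simp
qed

lemma cscalar_prod_smult:
  assumes "u \<in> carrier_vec n" and "v \<in> carrier_vec n"
  shows "(a \<cdot>\<^sub>v u) \<bullet>c (b \<cdot>\<^sub>v v) = a * cnj b * (u \<bullet>c v)"
  using assms by (simp add: cscalar_prod_conv_sum[of _ n] sum_distrib_left mult_ac)

lemma orthonormal_normalize:
  assumes carrier: "set us \<subseteq> carrier_vec n" and orth: "corthogonal us"
  shows "orthonormal (map (\<lambda>u. of_real (1 / sqrt (Re (u \<bullet>c u))) \<cdot>\<^sub>v u) us)"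
  unfolding orthonormal_def
proof (intro allI impI)
  define c where "c u = complex_of_real (1 / sqrt (Re (u \<bullet>c u)))" for u
  fix i j
  assume "i < length (map (\<lambda>u. of_real (1 / sqrt (Re (u \<bullet>c u))) \<cdot>\<^sub>v u) us)"
    and "j < length (map (\<lambda>u. of_real (1 / sqrt (Re (u \<bullet>c u))) \<cdot>\<^sub>v u) us)"
  then have ij: "i < length us" "j < length us"
    by simp_all
  have "map (\<lambda>u. of_real (1 / sqrt (Re (u \<bullet>c u))) \<cdot>\<^sub>v u) us ! i \<bullet>c
      map (\<lambda>u. of_real (1 / sqrt (Re (u \<bullet>c u))) \<cdot>\<^sub>v u) us ! j
    = c (us ! i) * cnj (c (us ! j)) * (us ! i \<bullet>c us ! j)"
    unfolding nth_map[OF ij(1)] nth_map[OF ij(2)] c_def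
    using carrier ij by (intro cscalar_prod_smult) auto
  also have "\<dots> = (if i = j then 1 else 0)"
  proof (cases "i = j")
    case True
    define \<rho> where "\<rho> = (\<Sum>r<n. (cmod (us ! i $ r))\<^sup>2)"
    have self: "us ! i \<bullet>c us ! i = of_real \<rho>"
      unfolding \<rho>_def using carrier ij by (intro cscalar_prod_self) auto
    have "\<rho> \<noteq> 0"
      using corthogonalD[OF orth ij(1) ij(1)] self by auto
    moreover have "\<rho> \<ge> 0"
      unfolding \<rho>_def by (intro sum_nonneg) auto
    ultimately have "1 / sqrt \<rho> * (1 / sqrt \<rho>) * \<rho> = 1"
      by (simp add: field_simps)
    moreover have "c (us ! i) * cnj (c (us ! i)) * (us ! i \<bullet>c us ! i)
      = complex_of_real (1 / sqrt \<rho> * (1 / sqrt \<rho>) * \<rho>)"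
      by (simp only: c_def self Re_complex_of_real complex_cnj_complex_of_real of_real_mult)
    ultimately show ?thesis
      using True by simp
  next
    case False
    then show ?thesis
      using corthogonalD[OF orth ij] by simp
  qed
  finally show "map (\<lambda>u. of_real (1 / sqrt (Re (u \<bullet>c u))) \<cdot>\<^sub>v u) us ! i \<bullet>c
      map (\<lambda>u. of_real (1 / sqrt (Re (u \<bullet>c u))) \<cdot>\<^sub>v u) us ! j = (if i = j then 1 else 0)" .
qed

lemma ex_orthonormal_kernel:
  assumes M: "M \<in> carrier_mat n n" and "t \<le> kernel_dim M"
  obtains ws where "length ws = t" "set ws \<subseteq> mat_kernel M" "orthonormal ws"
proof -
  interpret K: kernel n n M by (unfold_locales) (rule M)
  interpret V: cof_vec_space n "TYPE(complex)" .
  obtain B where B: "finite B" "K.basis B"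
    using kernel_basis_exists[OF M] by blast
  obtain xs where xs: "set xs = B" "distinct xs"
    using finite_distinct_list[OF B(1)] by blast
  have "length xs = kernel_dim M"
    using K.Ker.dim_basis[OF B] xs distinct_card by fastforce
  define vs where "vs = take t xs"
  have vs: "length vs = t" "distinct vs" "set vs \<subseteq> mat_kernel M"
    using \<open>length xs = kernel_dim M\<close> \<open>t \<le> kernel_dim M\<close> xs B(2) set_take_subset[of t xs]
    unfolding vs_def K.Ker.basis_def by auto
  have "K.lin_indpt (set vs)"
    using K.Ker.subset_li_is_li B(2) xs(1) set_take_subset[of t xs]
    unfolding vs_def K.Ker.basis_def by metis
  then have indpt: "\<not> module.lin_dep class_ring (module_vec TYPE(complex) n) (set vs)"
    using K.lindep_same[OF vs(3)] by simp
  have carrier: "set vs \<subseteq> carrier_vec n"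
    using vs(3) mat_kernel_carrier M by blast
  define us where "us = gram_schmidt n vs"
  note gs = V.gram_schmidt_result[OF carrier vs(2) indpt us_def]
  have "set us \<subseteq> LinearCombinations.module.span class_ring (module_vec TYPE(complex) n) (set vs)"
    using gs(1) K.NC.in_own_span[OF gs(3)] by simp
  also have "\<dots> \<subseteq> mat_kernel M"
    using K.span_same[OF vs(3)] K.Ker.span_is_subset2[OF vs(3)] by simp
  finally have "set us \<subseteq> mat_kernel M" .
  then show thesis
    using that[of "map (\<lambda>u. of_real (1 / sqrt (Re (u \<bullet>c u))) \<cdot>\<^sub>v u) us"] gs(3,4) vs(1)
      orthonormal_normalize[OF gs(3,2)] mat_kernel_smult[OF M] by auto
qed

lemma mult_mat_vec_eq_0_if_tendsto:
  assumes X: "\<And>k. X k \<in> carrier_mat n n" and A: "A \<in> carrier_mat n n" and lim: "mat_tendsto n X A"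
    and w: "\<And>k. w k \<in> carrier_vec n" and v: "v \<in> carrier_vec n"
    and lim_w: "\<And>r. r < n \<Longrightarrow> (\<lambda>k. w k $ r) \<longlonglongrightarrow> v $ r" and ker: "\<And>k. X k *\<^sub>v w k = 0\<^sub>v n"
  shows "A *\<^sub>v v = 0\<^sub>v n"
proof (rule eq_vecI)
  fix i
  assume "i < dim_vec (0\<^sub>v n :: complex vec)"
  then have i: "i < n"
    by simp
  have "(\<lambda>k. \<Sum>l<n. X k $$ (i, l) * w k $ l) \<longlonglongrightarrow> (\<Sum>l<n. A $$ (i, l) * v $ l)"
    using lim lim_w i unfolding mat_tendsto_def by (intro tendsto_intros) auto
  moreover have "(\<Sum>l<n. X k $$ (i, l) * w k $ l) = 0" for k
    using ker[of k] index_mult_mat_vec_sum[OF X w i] i by (metis index_zero_vec(1))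
  ultimately show "(A *\<^sub>v v) $ i = 0\<^sub>v n $ i"
    using index_mult_mat_vec_sum[OF A v i] i by (simp add: LIMSEQ_const_iff)
qed (use A in simp)

lemma orthonormal_if_tendsto:
  assumes "\<And>k. orthonormal (ws k)" and "\<And>k. length (ws k) = length vs"
    and carrier: "\<And>k q. q < length vs \<Longrightarrow> ws k ! q \<in> carrier_vec n" and "set vs \<subseteq> carrier_vec n"
    and lim: "\<And>q r. q < length vs \<Longrightarrow> r < n \<Longrightarrow> (\<lambda>k. ws k ! q $ r) \<longlonglongrightarrow> vs ! q $ r"
  shows "orthonormal vs"
  unfolding orthonormal_def
proof (intro allI impI)
  fix q q'
  assume q: "q < length vs" and q': "q' < length vs"
  have "(\<lambda>k. \<Sum>r<n. ws k ! q $ r * cnj (ws k ! q' $ r)) \<longlonglongrightarrow> (\<Sum>r<n. vs ! q $ r * cnj (vs ! q' $ r))"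
    using lim q q' by (intro tendsto_intros) auto
  moreover have "vs ! q' \<in> carrier_vec n"
    using assms(4) q' by auto
  ultimately have "(\<lambda>k. ws k ! q \<bullet>c ws k ! q') \<longlonglongrightarrow> vs ! q \<bullet>c vs ! q'"
    using cscalar_prod_conv_sum[OF carrier[OF q']] cscalar_prod_conv_sum[of "vs ! q'" n] by simp
  moreover have "ws k ! q \<bullet>c ws k ! q' = (if q = q' then 1 else 0)" for k
    using assms(1,2)[of k] q q' unfolding orthonormal_def by auto
  ultimately show "vs ! q \<bullet>c vs ! q' = (if q = q' then 1 else 0)"
    by (simp add: LIMSEQ_const_iff)
qed

text \<open>Upper semicontinuity of the nullity: orthonormal kernel vectors have a convergent
  subsequence, and their limits are again orthonormal kernel vectors of the limit matrix.\<close>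

lemma kernel_dim_ge_if_mat_tendsto:
  assumes X: "\<And>k. X k \<in> carrier_mat n n" and A: "A \<in> carrier_mat n n"
    and lim: "mat_tendsto n X A" and ker: "\<And>k. t \<le> kernel_dim (X k)"
  shows "t \<le> kernel_dim A"
proof -
  have "\<forall>k. \<exists>ws. length ws = t \<and> set ws \<subseteq> mat_kernel (X k) \<and> orthonormal ws"
    using ex_orthonormal_kernel[OF X ker] by metis
  then obtain ws where ws: "\<And>k. length (ws k) = t" "\<And>k. set (ws k) \<subseteq> mat_kernel (X k)"
    "\<And>k. orthonormal (ws k)"
    by metis
  have carrier: "ws k ! q \<in> carrier_vec n" if "q < t" for k q
    using ws(1,2)[of k] that mat_kernel_carrier[OF X, of k] nth_mem by blast
  have "cmod (ws k ! q $ r) \<le> 1" if "q < t" "r < n" for k q r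
    using ws(1,3)[of k] that carrier[OF that(1)] unfolding orthonormal_def
    by (intro cmod_index_le_1_if_unit) auto
  then obtain \<sigma> h where \<sigma>: "strict_mono \<sigma>"
    and h: "\<forall>(q, r)\<in>{..<t} \<times> {..<n}. (\<lambda>k. ws (\<sigma> k) ! q $ r) \<longlonglongrightarrow> h (q, r)"
    using convergent_subsequence_finite[of "{..<t} \<times> {..<n}" "\<lambda>k (q, r). ws k ! q $ r" 1]
    by fastforce
  define vs where "vs = map (\<lambda>q. vec n (\<lambda>r. h (q, r))) [0..<t]"
  have vs: "length vs = t" "set vs \<subseteq> carrier_vec n"
    unfolding vs_def by auto
  have lim_vs: "(\<lambda>k. ws (\<sigma> k) ! q $ r) \<longlonglongrightarrow> vs ! q $ r" if "q < t" "r < n" for q r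
    using h that unfolding vs_def by auto
  have "set vs \<subseteq> mat_kernel A"
  proof
    fix v
    assume "v \<in> set vs"
    then obtain q where q: "q < t" "v = vs ! q"
      using vs(1) by (auto simp: in_set_conv_nth)
    have "X (\<sigma> k) *\<^sub>v ws (\<sigma> k) ! q = 0\<^sub>v n" for k
      using ws(1,2)[of "\<sigma> k"] q(1) mat_kernelD(2)[OF X] nth_mem by blast
    then have "A *\<^sub>v v = 0\<^sub>v n"
      using \<open>v \<in> set vs\<close> vs(2) lim_vs[OF q(1)] q(2)
      by (intro mult_mat_vec_eq_0_if_tendsto[OF X A mat_tendsto_subseq[OF lim \<sigma>] carrier[OF q(1)]]) auto
    then show "v \<in> mat_kernel A"
      using A \<open>v \<in> set vs\<close> vs(2) by (auto intro: mat_kernelI)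
  qed
  moreover have "orthonormal vs"
    using ws(1,3) vs carrier lim_vs by (intro orthonormal_if_tendsto[of "\<lambda>k. ws (\<sigma> k)" vs n]) auto
  then have "corthogonal vs"
    unfolding orthonormal_def by (auto intro!: corthogonalI)
  ultimately show ?thesis
    using length_le_kernel_dim_if_corthogonal[OF A] vs(1) by fastforce
qed

section \<open>Matrix bundles\<close>

lemma count_mset_map_fst_filter:
  "count (mset (map fst (filter (\<lambda>(k, e). e = c) xs))) k = length (filter ((=) (k, c)) xs)"
  by (induction xs) auto

text \<open>The Segre characteristic does not depend on the Jordan normal form chosen by \<open>SOME\<close>,
  because the number of blocks of each size is determined by the matrix.\<close>

lemma segre_jordan_nf:
  assumes "jordan_nf A n_as"
  shows "segre A c = mset (map fst (filter (\<lambda>(k, e). e = c) n_as))"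
proof -
  define m_bs where "m_bs = (SOME m_bs. jordan_nf A m_bs)"
  have "jordan_nf A m_bs"
    unfolding m_bs_def using assms by (rule someI)
  have "count (mset (map fst (filter (\<lambda>(k, e). e = c) m_bs))) k
      = count (mset (map fst (filter (\<lambda>(k, e). e = c) n_as))) k" for k
  proof (cases "k = 0")
    case True
    have "length (filter ((=) (0, c)) xs) = 0" if "0 \<notin> fst ` set xs" for xs :: "(nat \<times> complex) list"
      using that by (force simp: filter_empty_conv)
    then show ?thesis
      using assms \<open>jordan_nf A m_bs\<close> True unfolding jordan_nf_def count_mset_map_fst_filter by simp
  next
    case False
    then show ?thesis
      unfolding count_mset_map_fst_filter
      using compute_nr_of_jordan_blocks[OF assms False] compute_nr_of_jordan_blocks[OF \<open>jordan_nf A m_bs\<close> False]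
      by simp
  qed
  then show ?thesis
    unfolding segre_def m_bs_def[symmetric] Let_def by (simp add: multiset_eqI)
qed

lemma poly_prod_linear_powers_eq_0_iff:
  assumes "0 \<notin> fst ` set n_as"
  shows "poly (\<Prod>(k, a)\<leftarrow>n_as. [:- a, 1:] ^ k) x = 0 \<longleftrightarrow> (x::'a::idom) \<in> snd ` set n_as"
  using assms
proof (induction n_as)
  case (Cons ka n_as)
  obtain k a where ka: "ka = (k, a)"
    by force
  then have "k \<noteq> 0"
    using Cons.prems by force
  then show ?case
    using Cons ka by auto
qed simp

lemma eigenvalue_iff_jordan_nf:
  fixes A :: "'a::field mat"
  assumes A: "A \<in> carrier_mat n n" and jnf: "jordan_nf A n_as"
  shows "eigenvalue A e \<longleftrightarrow> e \<in> snd ` set n_as"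
  unfolding eigenvalue_root_char_poly[OF A] jordan_nf_char_poly[OF jnf]
  using jnf unfolding jordan_nf_def by (intro poly_prod_linear_powers_eq_0_iff) simp

lemma jordan_nf_exists_complex:
  assumes "(A :: complex mat) \<in> carrier_mat n n"
  shows "\<exists>n_as. jordan_nf A n_as"
  using char_poly_factorized[OF assms] jordan_nf_exists[OF assms] by metis

lemma sum_list_group_by_snd:
  assumes "distinct ls" and "snd ` set xs \<subseteq> set ls"
  shows "(\<Sum>x\<leftarrow>xs. g x) = (\<Sum>l<length ls. \<Sum>x\<leftarrow>filter (\<lambda>(k, e). e = ls ! l) xs. g x)"
  using assms(2)
proof (induction xs)
  case (Cons x xs)
  then obtain l0 where l0: "l0 < length ls" "ls ! l0 = snd x"
    by (auto simp: in_set_conv_nth)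
  have eq_l0: "snd x = ls ! l \<longleftrightarrow> l = l0" if "l < length ls" for l
    using l0 that assms(1) nth_eq_iff_index_eq by metis
  have "(\<Sum>l<length ls. \<Sum>y\<leftarrow>filter (\<lambda>(k, e). e = ls ! l) (x # xs). g y)
      = (\<Sum>l<length ls. (if l = l0 then g x else 0) + (\<Sum>y\<leftarrow>filter (\<lambda>(k, e). e = ls ! l) xs. g y))"
    using eq_l0 by (intro sum.cong) (auto simp: case_prod_beta)
  also have "\<dots> = g x + (\<Sum>l<length ls. \<Sum>y\<leftarrow>filter (\<lambda>(k, e). e = ls ! l) xs. g y)"
    using l0(1) by (simp add: sum.distrib)
  finally show ?case
    using Cons by simp
qed simp

lemma matrix_bundle_kernel_dim:
  assumes "A \<in> matrix_bundle n Ss"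
  obtains ls where "length ls = length Ss" "distinct ls" "set ls = {c. eigenvalue A c}"
    "\<And>\<mu>s. kernel_dim (char_matrix_prod A \<mu>s)
       = (\<Sum>l<length Ss. \<Sum>s\<in>#Ss ! l. min (count (mset \<mu>s) (ls ! l)) s)"
proof -
  obtain ls where A: "A \<in> carrier_mat n n" and ls: "length ls = length Ss" "distinct ls"
    "set ls = {c. eigenvalue A c}" "\<And>l. l < length Ss \<Longrightarrow> segre A (ls ! l) = Ss ! l"
    using assms unfolding matrix_bundle_def by blast
  obtain n_as where jnf: "jordan_nf A n_as"
    using jordan_nf_exists_complex[OF A] by blast
  have "snd ` set n_as \<subseteq> set ls"
    using eigenvalue_iff_jordan_nf[OF A jnf] ls(3) by auto
  have "kernel_dim (char_matrix_prod A \<mu>s)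
      = (\<Sum>l<length Ss. \<Sum>s\<in>#Ss ! l. min (count (mset \<mu>s) (ls ! l)) s)" for \<mu>s
  proof -
    have "kernel_dim (char_matrix_prod A \<mu>s)
        = (\<Sum>l<length ls. \<Sum>(s, e)\<leftarrow>filter (\<lambda>(k, e). e = ls ! l) n_as. min (count (mset \<mu>s) e) s)"
      unfolding kernel_dim_char_matrix_prod_jordan_nf[OF A jnf]
      by (rule sum_list_group_by_snd) fact+
    also have "\<dots> = (\<Sum>l<length Ss. \<Sum>s\<in>#Ss ! l. min (count (mset \<mu>s) (ls ! l)) s)"
    proof (intro sum.cong)
      fix l
      assume "l \<in> {..<length Ss}"
      then have "Ss ! l = mset (map fst (filter (\<lambda>(k, e). e = ls ! l) n_as))"
        using ls(4) segre_jordan_nf[OF jnf] by simp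
      moreover have "(\<Sum>(s, e)\<leftarrow>filter (\<lambda>(k, e). e = c) xs. f s e)
          = (\<Sum>s\<in>#mset (map fst (filter (\<lambda>(k, e). e = c) xs)). f s c)"
        for f :: "nat \<Rightarrow> complex \<Rightarrow> nat" and c xs
        by (induction xs) auto
      ultimately show "(\<Sum>(s, e)\<leftarrow>filter (\<lambda>(k, e). e = ls ! l) n_as. min (count (mset \<mu>s) e) s)
          = (\<Sum>s\<in>#Ss ! l. min (count (mset \<mu>s) (ls ! l)) s)"
        by simp
    qed (use ls(1) in simp)
    finally show ?thesis .
  qed
  then show thesis
    using that ls(1-3) by blast
qed

lemma sum_count_le_size:
  assumes "finite A"
  shows "(\<Sum>x\<in>A. count M x) \<le> size M"
proof -
  have "(\<Sum>x\<in>A. count M x) = (\<Sum>x\<in>A \<inter> set_mset M. count M x)"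
    using assms by (intro sum.mono_neutral_right) (auto simp: count_eq_zero_iff)
  also have "\<dots> \<le> (\<Sum>x\<in>set_mset M. count M x)"
    by (intro sum_mono2) auto
  finally show ?thesis
    by (simp add: size_multiset_overloaded_eq)
qed

lemma kernel_dim_le_sum_min_deg_seq:
  assumes "valid_bundle_data n Ss" and "A \<in> matrix_bundle n Ss"
  shows "kernel_dim (char_matrix_prod A \<mu>s) \<le> (\<Sum>i<n. min (deg_seq Ss i) (length \<mu>s))"
proof -
  obtain ls where ls: "length ls = length Ss" "distinct ls"
    and ker: "kernel_dim (char_matrix_prod A \<mu>s)
      = (\<Sum>l<length Ss. \<Sum>s\<in>#Ss ! l. min (count (mset \<mu>s) (ls ! l)) s)"
    using matrix_bundle_kernel_dim[OF assms(2)] by metis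
  have "(\<Sum>l<length Ss. count (mset \<mu>s) (ls ! l)) = (\<Sum>x\<in>set ls. count (mset \<mu>s) x)"
    using ls by (simp add: sum_list_distinct_conv_sum_set[symmetric] sum_list_sum_nth atLeast0LessThan)
  also have "\<dots> \<le> length \<mu>s"
    using sum_count_le_size[of "set ls" "mset \<mu>s"] by simp
  finally have budget: "(\<Sum>l<length Ss. count (mset \<mu>s) (ls ! l)) \<le> length \<mu>s" .
  have "(\<Sum>s\<in>#Ss ! l. min (count (mset \<mu>s) (ls ! l)) s)
      = (\<Sum>i<n. min (seq_term (Ss ! l) i) (count (mset \<mu>s) (ls ! l)))" if "l < length Ss" for l
    using sum_seq_term[of "\<lambda>s. min s (count (mset \<mu>s) (ls ! l))" "Ss ! l" n]
      valid_bundle_data_size_le[OF assms(1)] that by (simp add: min.commute)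
  then have "kernel_dim (char_matrix_prod A \<mu>s)
      = (\<Sum>l<length Ss. \<Sum>i<n. min (seq_term (Ss ! l) i) (count (mset \<mu>s) (ls ! l)))"
    unfolding ker by (intro sum.cong) auto
  also have "\<dots> \<le> (\<Sum>i<n. min (deg_seq Ss i) (length \<mu>s))"
    unfolding deg_seq_conv_sum by (rule sum_sum_min_le_sum_min_sum[OF budget])
  finally show ?thesis .
qed

lemma count_concat_replicate_ge:
  assumes "l < L"
  shows "c l \<le> count (mset (concat (map (\<lambda>l. replicate (c l) (x l)) [0..<L]) @ ys)) (x l)"
proof -
  have "c l = count_list (replicate (c l) (x l)) (x l)"
    by (simp add: count_list_eq_length_filter)
  also have "\<dots> \<le> count_list (concat (map (\<lambda>l. replicate (c l) (x l)) [0..<L])) (x l)"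
    unfolding count_list_concat using assms by (intro member_le_sum_list) auto
  finally show ?thesis
    by (simp add: count_mset)
qed

lemma ex_kernel_dim_ge_sum_min_deg_seq:
  assumes valid: "valid_bundle_data n Ts" and "A \<in> matrix_bundle n Ts"
  obtains \<mu>s where "length \<mu>s = m" "set \<mu>s \<subseteq> insert 0 {c. eigenvalue A c}"
    "(\<Sum>i<n. min (deg_seq Ts i) m) \<le> kernel_dim (char_matrix_prod A \<mu>s)"
proof -
  let ?L = "length Ts"
  obtain ls where ls: "length ls = ?L" "set ls = {c. eigenvalue A c}"
    and ker: "\<And>\<mu>s. kernel_dim (char_matrix_prod A \<mu>s)
      = (\<Sum>l<?L. \<Sum>s\<in>#Ts ! l. min (count (mset \<mu>s) (ls ! l)) s)"
    using matrix_bundle_kernel_dim[OF assms(2)] by metis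
  have size_le: "size (Ts ! l) \<le> n" if "l < ?L" for l
    using valid_bundle_data_size_le[OF valid] that by simp
  have vanish: "seq_term (Ts ! l) i = 0" if "l < ?L" "n \<le> i" for l i
    using size_le[OF that(1)] that(2) by (simp add: seq_term_eq_0)
  obtain c where budget: "(\<Sum>l<?L. c l) \<le> m"
    and c: "(\<Sum>i<n. min (deg_seq Ts i) m) \<le> (\<Sum>l<?L. \<Sum>i<n. min (seq_term (Ts ! l) i) (c l))"
    using ex_sum_min_sum_le_sum_sum_min[of "\<lambda>l i. seq_term (Ts ! l) i" ?L n m, OF seq_term_antimono vanish]
    unfolding deg_seq_conv_sum by blast
  define \<mu>s where "\<mu>s = concat (map (\<lambda>l. replicate (c l) (ls ! l)) [0..<?L]) @ replicate (m - (\<Sum>l<?L. c l)) 0"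
  have length: "length \<mu>s = m"
    using budget by (simp add: \<mu>s_def length_concat o_def sum_list_sum_nth atLeast0LessThan)
  have set: "set \<mu>s \<subseteq> insert 0 {c. eigenvalue A c}"
    using ls by (auto simp: \<mu>s_def)
  have count_ge: "c l \<le> count (mset \<mu>s) (ls ! l)" if "l < ?L" for l
    unfolding \<mu>s_def by (rule count_concat_replicate_ge[OF that])
  have "(\<Sum>l<?L. \<Sum>i<n. min (seq_term (Ts ! l) i) (c l))
      \<le> (\<Sum>l<?L. \<Sum>s\<in>#Ts ! l. min (count (mset \<mu>s) (ls ! l)) s)"
  proof (intro sum_mono)
    fix l
    assume "l \<in> {..<?L}"
    then have "(\<Sum>i<n. min (seq_term (Ts ! l) i) (c l)) = (\<Sum>s\<in>#Ts ! l. min s (c l))"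
      using sum_seq_term[of "\<lambda>s. min s (c l)" "Ts ! l" n] size_le by simp
    also have "\<dots> \<le> (\<Sum>s\<in>#Ts ! l. min (count (mset \<mu>s) (ls ! l)) s)"
      using count_ge[of l] \<open>l \<in> {..<?L}\<close> by (intro sum_mset_mono) (auto simp: min_def)
    finally show "(\<Sum>i<n. min (seq_term (Ts ! l) i) (c l))
        \<le> (\<Sum>s\<in>#Ts ! l. min (count (mset \<mu>s) (ls ! l)) s)" .
  qed
  then show thesis
    using that[OF length set] c unfolding ker by (meson order_trans)
qed

lemma mset_map_fst_filter_blocks:
  fixes Ms :: "nat multiset list"
  assumes "inj_on f {..<length Ms}" and "l < length Ms"
  shows "mset (map fst (filter (\<lambda>(k, e). e = f l)
      (concat (map (\<lambda>l. map (\<lambda>s. (s, f l)) (sorted_list_of_multiset (Ms ! l))) [0..<length Ms])))) = Ms ! l"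
proof -
  let ?block = "\<lambda>l. map (\<lambda>s. (s, f l)) (sorted_list_of_multiset (Ms ! l))"
  have "filter (\<lambda>(k, e). e = f l) (?block l') = (if l' = l then ?block l' else [])" if "l' < length Ms" for l'
    using assms that unfolding inj_on_def by (auto simp: filter_id_conv filter_empty_conv)
  then have "filter (\<lambda>(k, e). e = f l) (concat (map ?block [0..<length Ms]))
      = concat (map (\<lambda>l'. if l' = l then ?block l' else []) [0..<length Ms])"
    unfolding filter_concat map_map by (intro arg_cong[where f = concat] map_cong) auto
  then have "mset (map fst (filter (\<lambda>(k, e). e = f l) (concat (map ?block [0..<length Ms]))))
      = (\<Sum>l'\<leftarrow>[0..<length Ms]. if l' = l then Ms ! l' else {#})"
    by (simp add: o_def map_concat mset_concat if_distrib multiset.map_comp cong: if_cong)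
  also have "\<dots> = Ms ! l"
    by (subst sum_list_distinct_conv_sum_set) (use assms(2) in \<open>auto simp: sum.delta\<close>)
  finally show ?thesis .
qed

lemma matrix_bundle_nonempty:
  assumes valid: "valid_bundle_data n Ss"
  obtains B where "B \<in> matrix_bundle n Ss"
proof -
  let ?L = "length Ss"
  define block where "block l = map (\<lambda>s. (s, complex_of_nat l)) (sorted_list_of_multiset (Ss ! l))" for l
  define n_as where "n_as = concat (map block [0..<?L])"
  define ls where "ls = map complex_of_nat [0..<?L]"
  have mset_block: "image_mset fst (mset (block l)) = Ss ! l" for l
    by (simp add: block_def multiset.map_comp o_def)
  have "mset (map fst n_as) = (\<Sum>l\<leftarrow>[0..<?L]. Ss ! l)"
    unfolding n_as_def by (simp add: map_concat mset_concat o_def mset_block)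
  also have "\<dots> = sum_list Ss"
    by (metis map_nth)
  finally have mset_n_as: "mset (map fst n_as) = sum_list Ss" .
  have "sum_list (map fst n_as) = sum_mset (sum_list Ss)"
    by (metis mset_n_as sum_mset_sum_list)
  also have "\<dots> = (\<Sum>S\<leftarrow>Ss. sum_mset S)"
    by (induction Ss) auto
  also have "\<dots> = n"
    using valid unfolding valid_bundle_data_def by simp
  finally have B: "jordan_matrix n_as \<in> carrier_mat n n"
    using jordan_matrix_carrier by metis
  have "0 \<notin> fst ` set n_as"
    using valid arg_cong[OF mset_n_as, of set_mset] unfolding valid_bundle_data_def
    by (auto simp: set_mset_sum_list)
  then have jnf: "jordan_nf (jordan_matrix n_as) n_as"
    unfolding jordan_nf_def using similar_mat_refl[OF B] by simp
  have "snd ` set (block l) = {complex_of_nat l}" if "l < ?L" for l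
    using valid nth_mem[OF that] unfolding block_def valid_bundle_data_def
    by (simp add: image_image image_constant_conv)
  then have "snd ` set n_as = set ls"
    unfolding n_as_def ls_def by (simp add: image_UN atLeast0LessThan) blast
  then have eigenvalues: "set ls = {c. eigenvalue (jordan_matrix n_as) c}"
    using eigenvalue_iff_jordan_nf[OF B jnf] by auto
  have segre: "segre (jordan_matrix n_as) (ls ! l) = Ss ! l" if "l < ?L" for l
    using segre_jordan_nf[OF jnf] mset_map_fst_filter_blocks[of complex_of_nat Ss l] that
    unfolding n_as_def block_def ls_def by (simp add: inj_on_def)
  have "length ls = ?L" "distinct ls"
    unfolding ls_def by (simp_all add: distinct_map inj_on_def)
  then have "jordan_matrix n_as \<in> matrix_bundle n Ss"
    unfolding matrix_bundle_def using B eigenvalues segre by (intro CollectI conjI exI[of _ ls]) auto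
  then show thesis ..
qed

lemma sum_min_deg_seq_le_if_mem_closure:
  assumes valid_S: "valid_bundle_data n Ss" and valid_T: "valid_bundle_data n Ts"
    and B: "B \<in> matrix_bundle n Ss" and closure: "B \<in> mat_closure n (matrix_bundle n Ts)"
  shows "(\<Sum>i<n. min (deg_seq Ts i) m) \<le> (\<Sum>i<n. min (deg_seq Ss i) m)"
proof -
  obtain X where X: "\<And>k. X k \<in> matrix_bundle n Ts" and lim: "mat_tendsto n X B"
    and B_carrier: "B \<in> carrier_mat n n"
    using closure unfolding mat_closure_def mat_tendsto_def by blast
  have X_carrier: "X k \<in> carrier_mat n n" for k
    using X unfolding matrix_bundle_def by blast
  have "\<exists>\<mu>s. length \<mu>s = m \<and> set \<mu>s \<subseteq> insert 0 {c. eigenvalue (X k) c} \<and>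
      (\<Sum>i<n. min (deg_seq Ts i) m) \<le> kernel_dim (char_matrix_prod (X k) \<mu>s)" for k
    by (rule ex_kernel_dim_ge_sum_min_deg_seq[OF valid_T X]) blast
  then obtain \<mu>s where \<mu>s: "\<And>k. length (\<mu>s k) = m" "\<And>k. set (\<mu>s k) \<subseteq> insert 0 {c. eigenvalue (X k) c}"
    "\<And>k. (\<Sum>i<n. min (deg_seq Ts i) m) \<le> kernel_dim (char_matrix_prod (X k) (\<mu>s k))"
    by metis
  obtain K where "0 \<le> K" and K: "\<And>k e. eigenvalue (X k) e \<Longrightarrow> cmod e \<le> K"
    using eigenvalues_bounded_if_mat_tendsto[OF X_carrier lim] by blast
  have "cmod (\<mu>s k ! r) \<le> K" if "r \<in> {..<m}" for k r
  proof -
    have "\<mu>s k ! r \<in> insert 0 {c. eigenvalue (X k) c}"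
      using \<mu>s(1,2) that by (metis lessThan_iff nth_mem subsetD)
    then show ?thesis
      using \<open>0 \<le> K\<close> K by auto
  qed
  then obtain \<sigma> g where \<sigma>: "strict_mono \<sigma>" "\<forall>r\<in>{..<m}. (\<lambda>k. \<mu>s (\<sigma> k) ! r) \<longlonglongrightarrow> g r"
    using convergent_subsequence_finite[of "{..<m}" "\<lambda>k r. \<mu>s k ! r" K] by blast
  define \<mu> where "\<mu> = map g [0..<m]"
  have "mat_tendsto n (\<lambda>k. char_matrix_prod (X (\<sigma> k)) (\<mu>s (\<sigma> k))) (char_matrix_prod B \<mu>)"
    by (rule mat_tendsto_char_matrix_prod[OF X_carrier B_carrier mat_tendsto_subseq[OF lim \<sigma>(1)]])
      (use \<mu>s(1) \<sigma>(2) in \<open>simp_all add: \<mu>_def\<close>)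
  then have "(\<Sum>i<n. min (deg_seq Ts i) m) \<le> kernel_dim (char_matrix_prod B \<mu>)"
    by (rule kernel_dim_ge_if_mat_tendsto[OF char_matrix_prod_carrier[OF X_carrier]
          char_matrix_prod_carrier[OF B_carrier] _ \<mu>s(3)])
  also have "\<dots> \<le> (\<Sum>i<n. min (deg_seq Ss i) m)"
    using kernel_dim_le_sum_min_deg_seq[OF valid_S B, of \<mu>] by (simp add: \<mu>_def)
  finally show ?thesis .
qed

theorem lemma4:
  fixes n :: nat and Ss Ts :: "nat multiset list"
  assumes "valid_bundle_data n Ss"
    and "valid_bundle_data n Ts"
    and "matrix_bundle n Ss \<subseteq> mat_closure n (matrix_bundle n Ts)"
    and "length Ss \<ge> length Ts"
  shows "dominates (deg_seq Ts) (deg_seq Ss)"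
proof -
  obtain B where B: "B \<in> matrix_bundle n Ss"
    using matrix_bundle_nonempty[OF assms(1)] .
  show ?thesis
  proof (rule dominatesI_sum_min[where N = n])
    show "deg_seq Ts j \<le> deg_seq Ts i" if "i \<le> j" for i j
      using that by (rule deg_seq_antimono)
    show "deg_seq Ts i = 0" "deg_seq Ss i = 0" if "n \<le> i" for i
      using deg_seq_eq_0[OF assms(2) that] deg_seq_eq_0[OF assms(1) that] by simp_all
    show "(\<Sum>i<n. deg_seq Ss i) = (\<Sum>i<n. deg_seq Ts i)"
      using sum_deg_seq[OF assms(1)] sum_deg_seq[OF assms(2)] by simp
    show "(\<Sum>i<n. min (deg_seq Ts i) m) \<le> (\<Sum>i<n. min (deg_seq Ss i) m)" for m
      using sum_min_deg_seq_le_if_mem_closure[OF assms(1,2) B] assms(3) B by blast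
  qed
qed

end
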